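(* Let $s,k,T\in\mathbb{N}$ and let $\mathcal{D}$ be any distribution on $\{0,1\}^T$. Then \[ \mathbf{S}^{s,k}[\mathcal{D}]\le \Pr_{w\sim\mathcal{D}}\bigl[\text{there is a decomposition } w=xyz \text{ with } |x|=s-1,\ |y|\ge k+1, \text{ such that } \mu_x(y)\ge 0\bigr]. \]
   Context: Characteristic strings and forks. A characteristic string is $w=w_1\dots w_n\in\{0,1\}^n$; index $i$ is honest if $w_i=0$ and adversarial if $w_i=1$. A fork for $w$ is a rooted tree with edges directed away from the root $r$ and labeling $\ell:V\to\{0,\dots,n\}$ with (F1) $\ell(r)=0$; (F2) labels strictly increasing along directed paths; (F3) each honest index labels exactly one vertex; (F4) for honest $i<j$ the vertex labeled $i$ has strictly smaller depth than the vertex labeled $j$. Write $F\vdash w$. A vertex is honest if it is the root or labeled by an honest index. A tine is a directed path from the root; its length is its number of edges, $\ell(t)$ the label of its last vertex. For $x$ a prefix of $w$, $F\vdash x$, $F'\vdash w$, $F\sqsubseteq F'$ means $F$ is a subgraph of $F'$ with identical labels. A fork is closed if every leaf is honest; a closed fork has a unique longest tine $\hat t$. Reach and relative margin. For closed $F\vdash w$ and tine $t$: $\mathrm{gap}(t)=\mathrm{length}(\hat t)-\mathrm{length}(t)$, $\mathrm{reserve}(t)=|\{i:w_i=1,\ i>\ell(t)\}|$, $\mathrm{reach}(t)=\mathrm{reserve}(t)-\mathrm{gap}(t)$. For $w=xy$, tines are disjoint over $y$ if they share no edge terminating at a vertex with label $>|x|$ (a tine may be paired with itself). $\mu_x(F)=\max\min\{\mathrm{reach}(t_1),\mathrm{reach}(t_2)\}$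 over pairs disjoint over $y$, and $\mu_x(y)=\max\{\mu_x(F):F\vdash xy\text{ closed}\}$. Settlement. For a fork $F\vdash w_1\dots w_t$ with $s+k\le t$, slot $s$ is not $k$-settled in $F$ if $F$ contains two tines of maximum length which either contain different vertices labeled $s$, or one contains a vertex labeled $s$ and the other does not. Settlement game. For a distribution $\mathcal{D}$ on $\{0,1\}^T$, the $(\mathcal{D},T;s,k)$-settlement game between an adversary $\mathcal{A}$ and a deterministic challenger: (1) $w\in\{0,1\}^T$ is drawn from $\mathcal{D}$ and given to $\mathcal{A}$; (2) $A_0$ is the single-vertex fork for the empty string; (3) for $t=1,\dots,T$: (a) if $w_t=0$, the challenger forms $F_t\vdash w_1\dots w_t$ by adding one vertex labeled $t$ to the end of a longest path of $A_{t-1}$ (ties broken by $\mathcal{A}$); (b) if $w_t=1$, $\mathcal{A}$ chooses an arbitrary fork $F_t\vdash w_1\dots w_t$ with $A_{t-1}\sqsubseteq F_t$; (c) $\mathcal{A}$ chooses an arbitrary fork $A_t\vdash w_1\dots w_t$ with $F_t\sqsubseteq A_t$. $\mathcal{A}$ wins if slot $s$ is not $k$-settled in some $A_t$ with $t\ge s+k$. $\mathbf{S}^{s,k}[\mathcal{D}]=\max_{\mathcal{A}}\Pr[\mathcal{A}\text{ wins}]$. *)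

theory Defs
  imports "HOL-Probability.Probability" "HOL-Library.Sublist"
begin

(* Characteristic strings: bool lists, True = 1 (adversarial), False = 0 (honest).
   Index i (1-based) of w is w ! (i - 1). *)

definition adv_idx :: "bool list \<Rightarrow> nat \<Rightarrow> bool" where
  "adv_idx w i \<longleftrightarrow> 1 \<le> i \<and> i \<le> length w \<and> w ! (i - 1)"

definition honest_idx :: "bool list \<Rightarrow> nat \<Rightarrow> bool" where
  "honest_idx w i \<longleftrightarrow> 1 \<le> i \<and> i \<le> length w \<and> \<not> w ! (i - 1)"

(* A fork: rooted tree whose vertices are addressed by paths of child indices
   (the root is []; the parent of v @ [c] is v), together with a labelling. *)
type_synonym fork = "nat list set \<times> (nat list \<Rightarrow> nat)"

definition verts :: "fork \<Rightarrow> nat list set" where "verts F = fst F"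
definition lab :: "fork \<Rightarrow> nat list \<Rightarrow> nat" where "lab F = snd F"

definition is_fork :: "bool list \<Rightarrow> fork \<Rightarrow> bool" where
  "is_fork w F \<longleftrightarrow>
     finite (verts F) \<and> [] \<in> verts F \<and>
     (\<forall>v\<in>verts F. \<forall>u. prefix u v \<longrightarrow> u \<in> verts F) \<and>
     (\<forall>v\<in>verts F. lab F v \<le> length w) \<and>
     lab F [] = 0 \<and>
     (\<forall>u\<in>verts F. \<forall>v\<in>verts F. strict_prefix u v \<longrightarrow> lab F u < lab F v) \<and>
     (\<forall>i. honest_idx w i \<longrightarrow> (\<exists>!v. v \<in> verts F \<and> lab F v = i)) \<and>
     (\<forall>u\<in>verts F. \<forall>v\<in>verts F. honest_idx w (lab F u) \<and> honest_idx w (lab F v)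
         \<and> lab F u < lab F v \<longrightarrow> length u < length v)"

definition subfork :: "fork \<Rightarrow> fork \<Rightarrow> bool" where
  "subfork F F' \<longleftrightarrow> verts F \<subseteq> verts F' \<and> (\<forall>v\<in>verts F. lab F v = lab F' v)"

definition is_leaf :: "fork \<Rightarrow> nat list \<Rightarrow> bool" where
  "is_leaf F v \<longleftrightarrow> v \<in> verts F \<and> \<not> (\<exists>u\<in>verts F. strict_prefix v u)"

definition honest_vertex :: "bool list \<Rightarrow> fork \<Rightarrow> nat list \<Rightarrow> bool" where
  "honest_vertex w F v \<longleftrightarrow> v = [] \<or> honest_idx w (lab F v)"

definition closed_fork :: "bool list \<Rightarrow> fork \<Rightarrow> bool" where
  "closed_fork w F \<longleftrightarrow> is_fork w F \<and> (\<forall>v. is_leaf F v \<longrightarrow> honest_vertex w F v)"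

(* Tines are identified with their terminal vertex v; the tine consists of the
   prefixes of v, its length is length v and its label is lab F v.
   height F = length of a longest tine. *)
definition height :: "fork \<Rightarrow> nat" where
  "height F = Max (length ` verts F)"

definition gap :: "fork \<Rightarrow> nat list \<Rightarrow> int" where
  "gap F t = int (height F) - int (length t)"

definition reserve :: "bool list \<Rightarrow> fork \<Rightarrow> nat list \<Rightarrow> nat" where
  "reserve w F t = card {i. adv_idx w i \<and> lab F t < i}"

definition reach :: "bool list \<Rightarrow> fork \<Rightarrow> nat list \<Rightarrow> int" where
  "reach w F t = int (reserve w F t) - gap F t"

(* tines t1, t2 share no edge terminating at a vertex with label > m (m = |x|) *)
definition disjoint_over :: "fork \<Rightarrow> nat \<Rightarrow> nat list \<Rightarrow> nat list \<Rightarrow> bool" where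
  "disjoint_over F m t1 t2 \<longleftrightarrow>
     (\<forall>u. u \<noteq> [] \<and> prefix u t1 \<and> prefix u t2 \<longrightarrow> lab F u \<le> m)"

definition mu_fork :: "bool list \<Rightarrow> bool list \<Rightarrow> fork \<Rightarrow> int" where
  "mu_fork x y F = Max {min (reach (x @ y) F t1) (reach (x @ y) F t2) | t1 t2.
      t1 \<in> verts F \<and> t2 \<in> verts F \<and> disjoint_over F (length x) t1 t2}"

(* mu_x(y) = max over closed forks (the max exists; Sup of ints coincides) *)
definition rel_margin :: "bool list \<Rightarrow> bool list \<Rightarrow> int" where
  "rel_margin x y = Sup {mu_fork x y F | F. closed_fork (x @ y) F}"

definition not_settled :: "nat \<Rightarrow> fork \<Rightarrow> bool" where
  "not_settled s F \<longleftrightarrow>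
     (\<exists>t1\<in>verts F. \<exists>t2\<in>verts F. length t1 = height F \<and> length t2 = height F \<and>
        ((\<exists>u1 u2. prefix u1 t1 \<and> prefix u2 t2 \<and> lab F u1 = s \<and> lab F u2 = s \<and> u1 \<noteq> u2) \<or>
         ((\<exists>u1. prefix u1 t1 \<and> lab F u1 = s) \<and> \<not> (\<exists>u2. prefix u2 t2 \<and> lab F u2 = s))))"

definition honest_extend :: "fork \<Rightarrow> nat list \<Rightarrow> nat \<Rightarrow> fork" where
  "honest_extend F u t =
     (let v = u @ [LEAST c. u @ [c] \<notin> verts F] in (insert v (verts F), (lab F)(v := t)))"

(* a play: the forks A_0..A_T and F_1..F_T *)
type_synonym play = "(nat \<Rightarrow> fork) \<times> (nat \<Rightarrow> fork)"

definition legal_play :: "nat \<Rightarrow> bool list \<Rightarrow> play \<Rightarrow> bool" where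
  "legal_play T w P \<longleftrightarrow>
     (let A = fst P; F = snd P in
       verts (A 0) = {[]} \<and> lab (A 0) [] = 0 \<and>
       (\<forall>t\<in>{1..T}.
          (if w ! (t - 1)
           then is_fork (take t w) (F t) \<and> subfork (A (t - 1)) (F t)
           else (\<exists>u\<in>verts (A (t - 1)). length u = height (A (t - 1)) \<and>
                   F t = honest_extend (A (t - 1)) u t)) \<and>
          is_fork (take t w) (A t) \<and> subfork (F t) (A t)))"

definition adv_wins :: "nat \<Rightarrow> nat \<Rightarrow> nat \<Rightarrow> play \<Rightarrow> bool" where
  "adv_wins T s k P \<longleftrightarrow> (\<exists>t. s + k \<le> t \<and> t \<le> T \<and> not_settled s (fst P t))"

(* S^{s,k}[D]: sup over adversaries. Since the adversary receives w up front and the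
   challenger is deterministic, an adversary is a map from w to a legal play. *)
definition settlement_value :: "bool list pmf \<Rightarrow> nat \<Rightarrow> nat \<Rightarrow> nat \<Rightarrow> real" where
  "settlement_value D T s k =
     (SUP adv \<in> {adv :: bool list \<Rightarrow> play. \<forall>w\<in>set_pmf D. legal_play T w (adv w)}.
        measure_pmf.prob D {w. adv_wins T s k (adv w)})"

end

theory Submission
  imports Defs
begin

text \<open>
  If the adversary wins, some fork A over w_1 ... w_t with t >= s + k leaves slot s unsettled, so
  it has two longest tines sharing no vertex labelled s or later: with x = w_1 ... w_(s-1) and
  y = w_s ... w_t they are disjoint over y. Cut each of them back to its last honest vertex. The
  cut tine lies in the honest closure of A, a closed fork no higher than A, and every removed
  vertex is adversarial with its own label beyond the cut point, so the reserve of the cut tine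
  pays for its gap and its reach is nonnegative. The cut tines stay disjoint over y, hence
  mu_x(y) >= 0.
\<close>

lemma verts_pair [simp]: "verts (V, l) = V"
  and lab_pair [simp]: "lab (V, l) = l"
  by (simp_all add: verts_def lab_def)

lemma is_fork_finite: "is_fork w A \<Longrightarrow> finite (verts A)"
  and is_fork_root: "is_fork w A \<Longrightarrow> [] \<in> verts A"
  and is_fork_prefix_closed: "is_fork w A \<Longrightarrow> v \<in> verts A \<Longrightarrow> prefix u v \<Longrightarrow> u \<in> verts A"
  and is_fork_lab_le: "is_fork w A \<Longrightarrow> v \<in> verts A \<Longrightarrow> lab A v \<le> length w"
  and is_fork_lab_root: "is_fork w A \<Longrightarrow> lab A [] = 0"
  and is_fork_lab_strict_mono: "is_fork w A \<Longrightarrow> u \<in> verts A \<Longrightarrow> v \<in> verts A \<Longrightarrow>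
    strict_prefix u v \<Longrightarrow> lab A u < lab A v"
  by (simp_all add: is_fork_def)

lemma is_fork_honest_depth:
  "is_fork w A \<Longrightarrow> u \<in> verts A \<Longrightarrow> v \<in> verts A \<Longrightarrow> honest_idx w (lab A u) \<Longrightarrow>
    honest_idx w (lab A v) \<Longrightarrow> lab A u < lab A v \<Longrightarrow> length u < length v"
  by (simp add: is_fork_def)

lemma is_fork_honest_unique:
  "is_fork w A \<Longrightarrow> honest_idx w i \<Longrightarrow> \<exists>!v. v \<in> verts A \<and> lab A v = i"
  by (simp add: is_fork_def)

lemma is_fork_honest_vertex:
  assumes "is_fork w A" "honest_idx w i" obtains v where "v \<in> verts A" "lab A v = i"
  using ex1_implies_ex[OF is_fork_honest_unique[OF assms]] that by blast

lemma is_fork_honest_vertex_unique: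
  assumes "is_fork w A" "honest_idx w i"
  shows "u \<in> verts A \<Longrightarrow> lab A u = i \<Longrightarrow> v \<in> verts A \<Longrightarrow> lab A v = i \<Longrightarrow> u = v"
  using is_fork_honest_unique[OF assms] by blast

lemma length_le_height: "is_fork w A \<Longrightarrow> v \<in> verts A \<Longrightarrow> length v \<le> height A"
  unfolding height_def by (simp add: is_fork_finite)

lemma height_attained:
  assumes "is_fork w A" obtains u where "u \<in> verts A" "length u = height A"
proof -
  have "height A \<in> length ` verts A"
    unfolding height_def using is_fork_finite[OF assms] is_fork_root[OF assms] by (intro Max_in) auto
  then show ?thesis using that by (metis imageE)
qed

lemma is_fork_restrict:
  assumes A: "is_fork w A" and V: "V \<subseteq> verts A" "[] \<in> V"
    and prefix_closed: "\<And>v u. v \<in> V \<Longrightarrow> prefix u v \<Longrightarrow> u \<in> V"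
    and honest_in: "\<And>v. v \<in> verts A \<Longrightarrow> honest_idx w (lab A v) \<Longrightarrow> v \<in> V"
  shows "is_fork w (V, lab A)"
proof -
  have sub: "\<And>v. v \<in> V \<Longrightarrow> v \<in> verts A" using V(1) by blast
  have unique: "\<exists>!v. v \<in> V \<and> lab A v = i" if i: "honest_idx w i" for i
  proof -
    obtain v where v: "v \<in> verts A" "lab A v = i" using is_fork_honest_vertex[OF A i] .
    show ?thesis
    proof (rule ex1I[of _ v])
      show "v \<in> V \<and> lab A v = i" using v honest_in i by simp
      show "u = v" if "u \<in> V \<and> lab A u = i" for u
        using that sub is_fork_honest_vertex_unique[OF A i _ _ v] by blast
    qed
  qed
  show ?thesis
    unfolding is_fork_def verts_pair lab_pair
  proof (intro conjI ballI allI impI)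
    show "finite V" using finite_subset[OF V(1) is_fork_finite[OF A]] .
    show "v \<in> V \<Longrightarrow> lab A v \<le> length w" for v using is_fork_lab_le[OF A] sub by blast
    show "lab A [] = 0" using is_fork_lab_root[OF A] .
    show "\<lbrakk>u \<in> V; v \<in> V; strict_prefix u v\<rbrakk> \<Longrightarrow> lab A u < lab A v" for u v
      using is_fork_lab_strict_mono[OF A] sub by blast
    show "\<lbrakk>u \<in> V; v \<in> V; honest_idx w (lab A u) \<and> honest_idx w (lab A v) \<and> lab A u < lab A v\<rbrakk>
      \<Longrightarrow> length u < length v" for u v
      using is_fork_honest_depth[OF A] sub by blast
    show "[] \<in> V" using V(2) .
    show "\<lbrakk>v \<in> V; prefix u v\<rbrakk> \<Longrightarrow> u \<in> V" for u v using prefix_closed .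
    show "honest_idx w i \<Longrightarrow> \<exists>!v. v \<in> V \<and> lab A v = i" for i using unique .
  qed
qed

text \<open>The closure of the paper (prune adversarial leaves until every leaf is honest) keeps
  exactly the prefixes of honest vertices.\<close>

definition honest_closure :: "bool list \<Rightarrow> fork \<Rightarrow> fork" where
  "honest_closure w A = ({v \<in> verts A. \<exists>h \<in> verts A. honest_vertex w A h \<and> prefix v h}, lab A)"

lemma verts_honest_closure:
  "verts (honest_closure w A) = {v \<in> verts A. \<exists>h \<in> verts A. honest_vertex w A h \<and> prefix v h}"
  by (simp add: honest_closure_def)

lemma lab_honest_closure: "lab (honest_closure w A) = lab A"
  by (simp add: honest_closure_def)

lemma honest_vertex_in_honest_closure:
  "h \<in> verts A \<Longrightarrow> honest_vertex w A h \<Longrightarrow> h \<in> verts (honest_closure w A)"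
  by (auto simp: verts_honest_closure)

lemma is_fork_honest_closure:
  assumes A: "is_fork w A" shows "is_fork w (honest_closure w A)"
proof -
  have "is_fork w (verts (honest_closure w A), lab A)"
  proof (rule is_fork_restrict[OF A])
    show "verts (honest_closure w A) \<subseteq> verts A" by (auto simp: verts_honest_closure)
    show "[] \<in> verts (honest_closure w A)"
      using is_fork_root[OF A] by (simp add: honest_vertex_in_honest_closure honest_vertex_def)
    show "u \<in> verts (honest_closure w A)" if "v \<in> verts (honest_closure w A)" "prefix u v" for u v
      using that is_fork_prefix_closed[OF A] prefix_order.trans
      unfolding verts_honest_closure by blast
    show "v \<in> verts (honest_closure w A)" if "v \<in> verts A" "honest_idx w (lab A v)" for v
      using that by (simp add: honest_vertex_in_honest_closure honest_vertex_def)
  qed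
  then show ?thesis by (simp add: honest_closure_def)
qed

lemma closed_fork_honest_closure:
  assumes A: "is_fork w A" shows "closed_fork w (honest_closure w A)"
  unfolding closed_fork_def
proof (intro conjI allI impI)
  show "is_fork w (honest_closure w A)" using is_fork_honest_closure[OF A] .
  fix v assume "is_leaf (honest_closure w A) v"
  then have v: "v \<in> verts (honest_closure w A)"
    and leaf: "\<not> (\<exists>u \<in> verts (honest_closure w A). strict_prefix v u)"
    by (auto simp: is_leaf_def)
  then obtain h where h: "h \<in> verts A" "honest_vertex w A h" "prefix v h"
    by (auto simp: verts_honest_closure)
  then have "v = h"
    using leaf honest_vertex_in_honest_closure by (auto simp: strict_prefix_def)
  then show "honest_vertex w (honest_closure w A) v"
    using h by (simp add: honest_vertex_def lab_honest_closure)
qed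

lemma height_mono:
  assumes "is_fork w' C" "finite (verts A)" "verts C \<subseteq> verts A"
  shows "height C \<le> height A"
  unfolding height_def using assms is_fork_root[OF assms(1)] by (intro Max_mono) auto

lemma is_fork_lab_take_strict_mono:
  assumes A: "is_fork w A" and t: "t \<in> verts A" and ij: "i < j" "j \<le> length t"
  shows "lab A (take i t) < lab A (take j t)"
proof -
  have j_A: "take j t \<in> verts A" using is_fork_prefix_closed[OF A t take_is_prefix] .
  have "take i t = take i (take j t)" using ij by simp
  then have prefix_ij: "prefix (take i t) (take j t)" by (metis take_is_prefix)
  moreover have "length (take i t) \<noteq> length (take j t)" using ij by simp
  ultimately have "strict_prefix (take i t) (take j t)" by (metis strict_prefix_def)
  moreover have "take i t \<in> verts A" using is_fork_prefix_closed[OF A j_A prefix_ij] .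
  ultimately show ?thesis using is_fork_lab_strict_mono[OF A _ j_A] by blast
qed

lemma longest_tine_trim_to_honest_closure:
  assumes A: "is_fork w A" and t: "t \<in> verts A" "length t = height A"
  obtains t' where "prefix t' t" "t' \<in> verts (honest_closure w A)"
    "0 \<le> reach w (honest_closure w A) t'"
proof -
  let ?C = "honest_closure w A"
  let ?honest_at = "\<lambda>j. j \<le> length t \<and> honest_vertex w A (take j t)"
  define j where "j = (GREATEST j. ?honest_at j)"
  have "?honest_at 0" by (simp add: honest_vertex_def)
  then have j: "?honest_at j"
    unfolding j_def by (rule GreatestI_nat[where b = "length t"]) simp
  have j_max: "i \<le> j" if "?honest_at i" for i
    unfolding j_def using that by (rule Greatest_le_nat[where b = "length t"]) simp
  define t' where "t' = take j t"
  have t'_A: "t' \<in> verts A" unfolding t'_def using is_fork_prefix_closed[OF A t(1) take_is_prefix] .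
  have t'_C: "t' \<in> verts ?C" using honest_vertex_in_honest_closure t'_A j by (simp add: t'_def)
  let ?lab = "\<lambda>i. lab A (take i t)"
  have adversarial: "?lab i \<in> {i. adv_idx w i \<and> lab ?C t' < i}" if i: "i \<in> {j<..length t}" for i
  proof -
    have in_A: "take i t \<in> verts A" using is_fork_prefix_closed[OF A t(1) take_is_prefix] .
    have "\<not> honest_vertex w A (take i t)" using i j_max by fastforce
    moreover have "lab ?C t' < ?lab i"
      using is_fork_lab_take_strict_mono[OF A t(1)] i by (simp add: t'_def lab_honest_closure)
    moreover have "?lab i \<le> length w" using is_fork_lab_le[OF A in_A] .
    ultimately show ?thesis by (auto simp: adv_idx_def honest_vertex_def honest_idx_def)
  qed
  have "inj_on ?lab {j<..length t}"
    using is_fork_lab_take_strict_mono[OF A t(1)]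
    by (intro strict_mono_on_imp_inj_on) (auto simp: strict_mono_on_def)
  then have "card {j<..length t} \<le> reserve w ?C t'"
    unfolding reserve_def using adversarial
    by (intro card_inj_on_le) (auto intro: finite_subset[of _ "{..length w}"] simp: adv_idx_def)
  moreover have "height ?C \<le> height A"
    using height_mono is_fork_honest_closure[OF A] is_fork_finite[OF A]
    by (auto simp: verts_honest_closure)
  ultimately have "0 \<le> reach w ?C t'"
    using j t(2) by (simp add: reach_def gap_def t'_def)
  then show ?thesis using that[OF take_is_prefix] t'_C by (simp add: t'_def)
qed

lemma tine_prefix_by_lab:
  assumes A: "is_fork w A" and t: "t \<in> verts A" and a: "prefix a t" and b: "prefix b t"
    and lab: "lab A a \<le> lab A b"
  shows "prefix a b"
proof -
  have "a \<in> verts A" "b \<in> verts A" using is_fork_prefix_closed[OF A t] a b by auto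
  moreover have "prefix a b \<or> prefix b a" using a b prefix_same_cases by blast
  ultimately show ?thesis
    using is_fork_lab_strict_mono[OF A] lab by (metis leD prefix_order.le_less)
qed

lemma not_settled_disjoint_over:
  assumes A: "is_fork w A" and "not_settled (Suc m) A"
  obtains t1 t2 where "t1 \<in> verts A" "t2 \<in> verts A" "length t1 = height A" "length t2 = height A"
    "disjoint_over A m t1 t2"
proof -
  obtain t1 t2 where t: "t1 \<in> verts A" "t2 \<in> verts A" "length t1 = height A" "length t2 = height A"
    and split: "(\<exists>u1 u2. prefix u1 t1 \<and> prefix u2 t2 \<and> lab A u1 = Suc m \<and> lab A u2 = Suc m \<and> u1 \<noteq> u2) \<or>
      ((\<exists>u1. prefix u1 t1 \<and> lab A u1 = Suc m) \<and> \<not> (\<exists>u2. prefix u2 t2 \<and> lab A u2 = Suc m))"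
    using assms(2) unfolding not_settled_def by blast
  have "lab A u \<le> m" if u: "prefix u t1" "prefix u t2" for u
  proof (rule ccontr)
    assume "\<not> lab A u \<le> m"
    then have late: "Suc m \<le> lab A u" by simp
    have u_A: "u \<in> verts A" using is_fork_prefix_closed[OF A t(1) u(1)] .
    from split show False
    proof (elim disjE exE conjE)
      fix u1 u2 assume u1: "prefix u1 t1" "lab A u1 = Suc m" and u2: "prefix u2 t2" "lab A u2 = Suc m"
        and "u1 \<noteq> u2"
      have "prefix u1 u" "prefix u2 u"
        using tine_prefix_by_lab[OF A t(1) u1(1) u(1)] tine_prefix_by_lab[OF A t(2) u2(1) u(2)]
          u1(2) u2(2) late by simp_all
      then have "prefix u1 u2" "prefix u2 u1"
        using tine_prefix_by_lab[OF A u_A] u1(2) u2(2) by simp_all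
      then show False using \<open>u1 \<noteq> u2\<close> by simp
    next
      fix u1 assume u1: "prefix u1 t1" "lab A u1 = Suc m"
        and missing: "\<not> (\<exists>u2. prefix u2 t2 \<and> lab A u2 = Suc m)"
      have "prefix u1 u" using tine_prefix_by_lab[OF A t(1) u1(1) u(1)] u1(2) late by simp
      then show False using missing u(2) u1(2) prefix_order.trans by blast
    qed
  qed
  then have "disjoint_over A m t1 t2" by (simp add: disjoint_over_def)
  then show ?thesis using that t by blast
qed

lemma finite_mu_fork_candidates:
  "finite (verts F) \<Longrightarrow>
    finite {min (reach w F t1) (reach w F t2) | t1 t2. t1 \<in> verts F \<and> t2 \<in> verts F \<and> disjoint_over F m t1 t2}"
  by (rule finite_subset[of _ "(\<lambda>(t1, t2). min (reach w F t1) (reach w F t2)) ` (verts F \<times> verts F)"]) auto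

lemma min_reach_le_mu_fork:
  assumes "is_fork (x @ y) F" "t1 \<in> verts F" "t2 \<in> verts F" "disjoint_over F (length x) t1 t2"
  shows "min (reach (x @ y) F t1) (reach (x @ y) F t2) \<le> mu_fork x y F"
  unfolding mu_fork_def using assms finite_mu_fork_candidates[OF is_fork_finite[OF assms(1)]]
  by (intro Max_ge) auto

lemma reach_le_length:
  assumes A: "is_fork w A" and t: "t \<in> verts A" shows "reach w A t \<le> int (length w)"
proof -
  have "reserve w A t \<le> card {1..length w}"
    unfolding reserve_def adv_idx_def by (rule card_mono) auto
  moreover have "length t \<le> height A" using length_le_height[OF A t] .
  ultimately show ?thesis by (simp add: reach_def gap_def)
qed

lemma mu_fork_le_length:
  assumes F: "is_fork (x @ y) F" shows "mu_fork x y F \<le> int (length (x @ y))"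
proof -
  have "disjoint_over F (length x) [] []" by (simp add: disjoint_over_def)
  then show ?thesis
    unfolding mu_fork_def using finite_mu_fork_candidates[OF is_fork_finite[OF F]]
      is_fork_root[OF F] reach_le_length[OF F]
    by (subst Max_le_iff) fastforce+
qed

lemma mu_fork_le_rel_margin:
  assumes "closed_fork (x @ y) F" shows "mu_fork x y F \<le> rel_margin x y"
  unfolding rel_margin_def
proof (rule cSup_upper)
  show "mu_fork x y F \<in> {mu_fork x y F | F. closed_fork (x @ y) F}" using assms by blast
  show "bdd_above {mu_fork x y F | F. closed_fork (x @ y) F}"
    using mu_fork_le_length by (auto simp: closed_fork_def intro!: bdd_aboveI[of _ "int (length (x @ y))"])
qed

lemma rel_margin_nonneg_if_not_settled:
  assumes A: "is_fork (x @ y) A" and "not_settled (Suc (length x)) A"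
  shows "0 \<le> rel_margin x y"
proof -
  let ?C = "honest_closure (x @ y) A"
  obtain t1 t2 where t: "t1 \<in> verts A" "t2 \<in> verts A" "length t1 = height A" "length t2 = height A"
    and disjoint: "disjoint_over A (length x) t1 t2"
    using not_settled_disjoint_over[OF assms] .
  obtain t1' where t1': "prefix t1' t1" "t1' \<in> verts ?C" "0 \<le> reach (x @ y) ?C t1'"
    using longest_tine_trim_to_honest_closure[OF A t(1,3)] .
  obtain t2' where t2': "prefix t2' t2" "t2' \<in> verts ?C" "0 \<le> reach (x @ y) ?C t2'"
    using longest_tine_trim_to_honest_closure[OF A t(2,4)] .
  have "disjoint_over ?C (length x) t1' t2'"
    using disjoint t1'(1) t2'(1) prefix_order.trans
    unfolding disjoint_over_def lab_honest_closure by blast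
  then have "min (reach (x @ y) ?C t1') (reach (x @ y) ?C t2') \<le> mu_fork x y ?C"
    using min_reach_le_mu_fork is_fork_honest_closure[OF A] t1'(2) t2'(2) by blast
  also have "\<dots> \<le> rel_margin x y"
    using mu_fork_le_rel_margin closed_fork_honest_closure[OF A] by blast
  finally show ?thesis using t1'(3) t2'(3) by linarith
qed

lemma is_fork_lab_eq_0:
  assumes A: "is_fork w A" and "v \<in> verts A" "prefix u v" "lab A u = 0"
  shows "u = []"
proof (rule ccontr)
  assume "u \<noteq> []"
  then have "lab A [] < lab A u"
    using is_fork_lab_strict_mono[OF A is_fork_root[OF A] is_fork_prefix_closed[OF A assms(2,3)]]
    by (simp add: strict_prefix_def)
  then show False using assms(4) by simp
qed

lemma slot_0_settled:
  assumes root: "lab A [] = 0"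
    and zero: "\<And>v u. v \<in> verts A \<Longrightarrow> prefix u v \<Longrightarrow> lab A u = 0 \<Longrightarrow> u = []"
  shows "\<not> not_settled 0 A"
proof
  assume "not_settled 0 A"
  then obtain t1 t2 where t: "t1 \<in> verts A" "t2 \<in> verts A"
    and split: "(\<exists>u1 u2. prefix u1 t1 \<and> prefix u2 t2 \<and> lab A u1 = 0 \<and> lab A u2 = 0 \<and> u1 \<noteq> u2) \<or>
      ((\<exists>u1. prefix u1 t1 \<and> lab A u1 = 0) \<and> \<not> (\<exists>u2. prefix u2 t2 \<and> lab A u2 = 0))"
    unfolding not_settled_def by blast
  from split show False
  proof (elim disjE exE conjE)
    fix u1 u2 assume u: "prefix u1 t1" "prefix u2 t2" "lab A u1 = 0" "lab A u2 = 0" "u1 \<noteq> u2"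
    have "u1 = []" "u2 = []" using zero[OF t(1) u(1,3)] zero[OF t(2) u(2,4)] .
    then show False using u(5) by simp
  next
    assume "\<not> (\<exists>u2. prefix u2 t2 \<and> lab A u2 = 0)"
    then show False using root Nil_prefix by blast
  qed
qed

lemma adv_wins_imp_rel_margin_nonneg:
  assumes w: "length w = T" and play: "legal_play T w P" and "adv_wins T s k P"
  shows "\<exists>x y z. w = x @ y @ z \<and> length x = s - 1 \<and> k + 1 \<le> length y \<and> 0 \<le> rel_margin x y"
proof -
  obtain t where t: "s + k \<le> t" "t \<le> T" and unsettled: "not_settled s (fst P t)"
    using assms(3) unfolding adv_wins_def by blast
  have forks: "is_fork (take t w) (fst P t)" if "1 \<le> t"
    using play that t(2) unfolding legal_play_def Let_def by auto
  \<comment> \<open>slot 0 labels only the root, so the truncated case s - 1 = 0 - 1 never arises\<close>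
  have "s \<noteq> 0"
  proof
    assume "s = 0"
    moreover have "\<not> not_settled 0 (fst P t)"
    proof (cases "t = 0")
      case True
      then show ?thesis using play by (intro slot_0_settled) (auto simp: legal_play_def Let_def)
    next
      case False
      then show ?thesis
        using forks is_fork_lab_root is_fork_lab_eq_0 by (intro slot_0_settled) auto
    qed
    ultimately show False using unsettled by simp
  qed
  define x where "x = take (s - 1) w"
  define y where "y = take (t - (s - 1)) (drop (s - 1) w)"
  have xy: "x @ y = take t w"
    using t \<open>s \<noteq> 0\<close> by (simp add: x_def y_def take_add[symmetric])
  have "w = x @ y @ drop t w" by (simp flip: append_assoc add: xy)
  moreover have "length x = s - 1" "k + 1 \<le> length y"
    using t w \<open>s \<noteq> 0\<close> by (simp_all add: x_def y_def)
  moreover have "0 \<le> rel_margin x y"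
  proof (rule rel_margin_nonneg_if_not_settled)
    show "is_fork (x @ y) (fst P t)" using forks t \<open>s \<noteq> 0\<close> by (simp add: xy)
    show "not_settled (Suc (length x)) (fst P t)"
      using unsettled t w \<open>s \<noteq> 0\<close> by (simp add: x_def)
  qed
  ultimately show ?thesis by blast
qed

lemma prob_adv_wins_le:
  assumes lengths: "set_pmf D \<subseteq> {w. length w = T}" and legal: "\<forall>w\<in>set_pmf D. legal_play T w (adv w)"
  shows "measure_pmf.prob D {w. adv_wins T s k (adv w)} \<le>
    measure_pmf.prob D {w. \<exists>x y z. w = x @ y @ z \<and> length x = s - 1 \<and> k + 1 \<le> length y \<and> 0 \<le> rel_margin x y}"
    (is "_ \<le> measure_pmf.prob D ?R")
proof (rule measure_pmf.finite_measure_mono_AE)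
  show "AE w in D. w \<in> {w. adv_wins T s k (adv w)} \<longrightarrow> w \<in> ?R"
  proof (rule AE_pmfI)
    fix w assume "w \<in> set_pmf D"
    then have "length w = T" "legal_play T w (adv w)" using lengths legal by auto
    then show "w \<in> {w. adv_wins T s k (adv w)} \<longrightarrow> w \<in> ?R"
      using adv_wins_imp_rel_margin_nonneg by blast
  qed
qed simp

lemma honest_idx_snoc:
  "honest_idx (w @ [b]) i \<longleftrightarrow> honest_idx w i \<or> (i = Suc (length w) \<and> \<not> b)"
  by (auto simp: honest_idx_def nth_append)

lemma is_fork_snoc_True: "is_fork w A \<Longrightarrow> is_fork (w @ [True]) A"
  unfolding is_fork_def honest_idx_snoc by (auto intro: le_SucI)

lemma honest_extend_fresh_child:
  assumes "finite (verts A)"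
  obtains c where "u @ [c] \<notin> verts A"
    and "honest_extend A u n = (insert (u @ [c]) (verts A), (lab A)(u @ [c] := n))"
proof -
  have "finite ((\<lambda>c. u @ [c]) -` verts A)"
    using assms by (rule finite_vimageI) (simp add: inj_def)
  then have "\<exists>c::nat. u @ [c] \<notin> verts A"
    using ex_new_if_finite[of "(\<lambda>c. u @ [c]) -` verts A"] by auto
  then show ?thesis
    using that LeastI_ex[of "\<lambda>c. u @ [c] \<notin> verts A"] by (simp add: honest_extend_def Let_def)
qed

context
  fixes w :: "bool list" and A :: fork and u :: "nat list" and c :: nat
  assumes A: "is_fork w A" and u: "u \<in> verts A" and u_longest: "length u = height A"
    and fresh: "u @ [c] \<notin> verts A"
begin

abbreviation extended_fork :: fork where
  "extended_fork \<equiv> (insert (u @ [c]) (verts A), (lab A)(u @ [c] := Suc (length w)))"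

lemma lab_extended_fork_old: "a \<in> verts A \<Longrightarrow> lab extended_fork a = lab A a"
  using fresh by auto

lemma old_lab_less_new_lab: "a \<in> verts A \<Longrightarrow> lab A a < Suc (length w)"
  using is_fork_lab_le[OF A] by (simp add: less_Suc_eq_le)

lemma extended_fork_honest_unique:
  assumes i: "honest_idx (w @ [False]) i"
  shows "\<exists>!a. a \<in> verts extended_fork \<and> lab extended_fork a = i"
proof (cases "i = Suc (length w)")
  case True
  show ?thesis
  proof (rule ex1I[of _ "u @ [c]"])
    show "u @ [c] \<in> verts extended_fork \<and> lab extended_fork (u @ [c]) = i" using True by simp
  next
    fix b assume "b \<in> verts extended_fork \<and> lab extended_fork b = i"
    then show "b = u @ [c]"
      using True lab_extended_fork_old old_lab_less_new_lab by (metis insert_iff less_irrefl verts_pair)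
  qed
next
  case False
  then have i_old: "honest_idx w i" using i by (simp add: honest_idx_snoc)
  obtain a where a: "a \<in> verts A" "lab A a = i" using is_fork_honest_vertex[OF A i_old] .
  show ?thesis
  proof (rule ex1I[of _ a])
    show "a \<in> verts extended_fork \<and> lab extended_fork a = i" using a lab_extended_fork_old by simp
  next
    fix b assume b: "b \<in> verts extended_fork \<and> lab extended_fork b = i"
    then have "b \<noteq> u @ [c]" using False by auto
    with b have "b \<in> verts A" by simp
    then show "b = a"
      using is_fork_honest_vertex_unique[OF A i_old _ _ a] b lab_extended_fork_old by simp
  qed
qed

lemma extended_fork_lab_strict_mono:
  assumes a: "a \<in> verts extended_fork" and b: "b \<in> verts extended_fork" and ab: "strict_prefix a b"
  shows "lab extended_fork a < lab extended_fork b"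
proof (cases "b = u @ [c]")
  case True
  then have "prefix a u" using ab by (auto simp: strict_prefix_def prefix_snoc)
  then have "a \<in> verts A" using is_fork_prefix_closed[OF A u] by blast
  then show ?thesis using True lab_extended_fork_old old_lab_less_new_lab by simp
next
  case False
  then have "b \<in> verts A" using b by simp
  moreover have "a \<in> verts A"
    using is_fork_prefix_closed[OF A \<open>b \<in> verts A\<close>] ab by (auto simp: strict_prefix_def)
  ultimately show ?thesis
    using ab is_fork_lab_strict_mono[OF A] lab_extended_fork_old by simp
qed

lemma extended_fork_honest_depth:
  assumes a: "a \<in> verts extended_fork" and b: "b \<in> verts extended_fork"
    and honest: "honest_idx (w @ [False]) (lab extended_fork a)" "honest_idx (w @ [False]) (lab extended_fork b)"
    and less: "lab extended_fork a < lab extended_fork b"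
  shows "length a < length b"
proof (cases "b = u @ [c]")
  case True
  have "a \<noteq> u @ [c]" using less True by auto
  then have "a \<in> verts A" using a by simp
  then show ?thesis using True length_le_height[OF A] u_longest by fastforce
next
  case False
  then have b_A: "b \<in> verts A" using b by simp
  then have "a \<noteq> u @ [c]"
    using less lab_extended_fork_old old_lab_less_new_lab by fastforce
  then have a_A: "a \<in> verts A" using a by simp
  have "honest_idx w (lab A a)" "honest_idx w (lab A b)"
    using honest lab_extended_fork_old[OF a_A] lab_extended_fork_old[OF b_A]
      old_lab_less_new_lab[OF a_A] old_lab_less_new_lab[OF b_A]
    by (simp_all add: honest_idx_snoc)
  then show ?thesis
    using is_fork_honest_depth[OF A a_A b_A] less lab_extended_fork_old[OF a_A] lab_extended_fork_old[OF b_A]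
    by simp
qed

lemma is_fork_snoc_False: "is_fork (w @ [False]) extended_fork"
  unfolding is_fork_def
proof (intro conjI ballI allI impI)
  show "finite (verts extended_fork)" using is_fork_finite[OF A] by simp
  show "[] \<in> verts extended_fork" using is_fork_root[OF A] by simp
  show "p \<in> verts extended_fork" if "a \<in> verts extended_fork" "prefix p a" for a p
    using that is_fork_prefix_closed[OF A] u by (auto simp: prefix_snoc)
  show "lab extended_fork a \<le> length (w @ [False])" if "a \<in> verts extended_fork" for a
    using that is_fork_lab_le[OF A] by (cases "a = u @ [c]") (auto simp: le_SucI)
  show "lab extended_fork [] = 0" using is_fork_lab_root[OF A] is_fork_root[OF A] fresh by auto
  show "lab extended_fork a < lab extended_fork b"
    if "a \<in> verts extended_fork" "b \<in> verts extended_fork" "strict_prefix a b" for a b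
    using extended_fork_lab_strict_mono that .
  show "\<exists>!a. a \<in> verts extended_fork \<and> lab extended_fork a = i" if "honest_idx (w @ [False]) i" for i
    using extended_fork_honest_unique that .
  show "length a < length b"
    if "a \<in> verts extended_fork" "b \<in> verts extended_fork"
      "honest_idx (w @ [False]) (lab extended_fork a) \<and> honest_idx (w @ [False]) (lab extended_fork b) \<and>
       lab extended_fork a < lab extended_fork b" for a b
    using extended_fork_honest_depth that by blast
qed

end

text \<open>The supremum of an empty set of reals is unspecified, so the bound needs one legal
  adversary: the one that never deviates from the honest play.\<close>

fun honest_play :: "bool list \<Rightarrow> nat \<Rightarrow> fork" where
  "honest_play w 0 = ({[]}, \<lambda>_. 0)"
| "honest_play w (Suc t) = (if w ! t then honest_play w t else
     honest_extend (honest_play w t)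
       (SOME u. u \<in> verts (honest_play w t) \<and> length u = height (honest_play w t)) (Suc t))"

lemma is_fork_honest_play: "t \<le> length w \<Longrightarrow> is_fork (take t w) (honest_play w t)"
proof (induction t)
  case 0
  show ?case by (simp add: is_fork_def honest_idx_def)
next
  case (Suc t)
  then have A: "is_fork (take t w) (honest_play w t)" and take_Suc: "take (Suc t) w = take t w @ [w ! t]"
    by (simp_all add: take_Suc_conv_app_nth)
  let ?u = "SOME u. u \<in> verts (honest_play w t) \<and> length u = height (honest_play w t)"
  have u: "?u \<in> verts (honest_play w t)" "length ?u = height (honest_play w t)"
    using height_attained[OF A] someI by (metis (mono_tags, lifting))+
  obtain c where "?u @ [c] \<notin> verts (honest_play w t)" and
    "honest_extend (honest_play w t) ?u (Suc t) = (insert (?u @ [c]) (verts (honest_play w t)),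
       (lab (honest_play w t))(?u @ [c] := Suc t))"
    using honest_extend_fresh_child is_fork_finite[OF A] by blast
  then show ?case
    using is_fork_snoc_True[OF A] is_fork_snoc_False[OF A u] Suc.prems take_Suc by auto
qed

lemma legal_play_honest_play:
  assumes "length w = T" shows "legal_play T w (honest_play w, honest_play w)"
proof -
  have forks: "is_fork (take t w) (honest_play w t)" if "t \<in> {1..T}" for t
    using that assms by (intro is_fork_honest_play) simp
  have step: "if w ! (t - 1) then is_fork (take t w) (honest_play w t) \<and>
        subfork (honest_play w (t - 1)) (honest_play w t)
      else \<exists>u\<in>verts (honest_play w (t - 1)). length u = height (honest_play w (t - 1)) \<and>
        honest_play w t = honest_extend (honest_play w (t - 1)) u t"
    if t_range: "t \<in> {1..T}" for t
  proof -
    obtain t' where t: "t = Suc t'" "t' < length w" using t_range assms by (cases t) auto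
    have "is_fork (take t' w) (honest_play w t')" using t by (intro is_fork_honest_play) simp
    then have longest: "\<exists>u. u \<in> verts (honest_play w t') \<and> length u = height (honest_play w t')"
      by (meson height_attained)
    show ?thesis
    proof (cases "w ! t'")
      case True
      then show ?thesis using t(1) forks[OF t_range] by (simp add: subfork_def)
    next
      case False
      then show ?thesis using t(1) someI_ex[OF longest] by simp blast
    qed
  qed
  have "verts (honest_play w 0) = {[]}" "lab (honest_play w 0) [] = 0"
    by simp_all
  moreover have "subfork A A" for A by (simp add: subfork_def)
  ultimately show ?thesis
    unfolding legal_play_def Let_def fst_conv snd_conv using forks step by blast
qed

theorem lemma5:
  fixes s k T :: nat and D :: "bool list pmf"
  assumes "set_pmf D \<subseteq> {w. length w = T}"
  shows "settlement_value D T s k \<le>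
    measure_pmf.prob D {w. \<exists>x y z. w = x @ y @ z \<and> length x = s - 1 \<and>
                              k + 1 \<le> length y \<and> 0 \<le> rel_margin x y}"
proof -
  have "(\<lambda>w. (honest_play w, honest_play w)) \<in> {adv. \<forall>w\<in>set_pmf D. legal_play T w (adv w)}"
    using assms legal_play_honest_play by auto
  then have "{adv. \<forall>w\<in>set_pmf D. legal_play T w (adv w)} \<noteq> {}" by (metis empty_iff)
  then show ?thesis
    unfolding settlement_value_def by (rule cSUP_least) (rule prob_adv_wins_le[OF assms], simp)
qed

end
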